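(* Let $Q\subset S^d$ be affinely independent, and let $S(C,R)$ be its touching sphere. Then $Q$ is nearly positively spanning if and only if $C\in\mathrm{conv}\,Q$. In this case $\mathrm{def}\,Q=\sqrt{1-R^2}$.
   Context: $S^d$ is the unit sphere in $\mathbb{R}^{d+1}$, $O$ is the origin, and $S(C,R)=\{x\in\mathbb{R}^{d+1}:\|x-C\|=R\}$. The touching sphere of an affinely independent set $Q$ is the unique sphere $S(C,R)$ with $C\in\mathrm{aff}\,Q$ and $Q\subset S(C,R)$. The set $Q$ is nearly positively spanning if it is affinely independent and the orthogonal projection $O'$ of $O$ onto $\mathrm{aff}\,Q$ lies in $\mathrm{conv}\,Q$. Its deficiency is then $\mathrm{def}\,Q=\|O'\|$. *)

theory Defs
  imports "HOL-Analysis.Analysis"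
begin

definition touching_sphere :: "'a::euclidean_space set \<Rightarrow> 'a \<Rightarrow> real \<Rightarrow> bool" where
  "touching_sphere Q C R \<longleftrightarrow> C \<in> affine hull Q \<and> Q \<subseteq> sphere C R"

definition proj_origin :: "'a::euclidean_space set \<Rightarrow> 'a" where
  "proj_origin Q = closest_point (affine hull Q) 0"

definition nearly_pos_spanning :: "'a::euclidean_space set \<Rightarrow> bool" where
  "nearly_pos_spanning Q \<longleftrightarrow> \<not> affine_dependent Q \<and> proj_origin Q \<in> convex hull Q"

definition deficiency :: "'a::euclidean_space set \<Rightarrow> real" where
  "deficiency Q = norm (proj_origin Q)"

end

theory Submission
  imports Defs
begin

text \<open>The unit sphere and the touching sphere \<open>S(C,R)\<close> meet in a hyperplane orthogonal to \<open>C\<close>,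
  which therefore contains \<open>aff Q\<close>. As \<open>C\<close> itself lies in \<open>aff Q\<close>, this hyperplane passes
  through \<open>C\<close>, so \<open>C\<close> is the foot \<open>O'\<close> of the perpendicular from the origin, and Pythagoras
  gives \<open>|C|\<^sup>2 + R\<^sup>2 = 1\<close>.\<close>

lemma sphere_inter_sphere_subset_hyperplane:
  fixes C :: "'a::real_inner"
  shows "sphere 0 r \<inter> sphere C R \<subseteq> {y. C \<bullet> y = (r\<^sup>2 + C \<bullet> C - R\<^sup>2) / 2}"
proof
  fix y assume "y \<in> sphere 0 r \<inter> sphere C R"
  then have "y \<bullet> y = r\<^sup>2" "(y - C) \<bullet> (y - C) = R\<^sup>2"
    by (auto simp flip: power2_norm_eq_inner simp: dist_norm norm_minus_commute)
  then show "y \<in> {y. C \<bullet> y = (r\<^sup>2 + C \<bullet> C - R\<^sup>2) / 2}"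
    by (simp add: inner_diff_left inner_diff_right inner_commute algebra_simps)
qed

lemma closest_point_origin_eq:
  fixes S :: "'a::euclidean_space set"
  assumes "convex S" "closed S" "C \<in> S" "S \<subseteq> {y. C \<bullet> y = C \<bullet> C}"
  shows "closest_point S 0 = C"
proof (rule closest_point_unique[symmetric, OF assms(1-3)])
  show "\<forall>z\<in>S. dist 0 C \<le> dist 0 z"
  proof
    fix z assume "z \<in> S"
    with assms(4) have "z \<bullet> z = (z - C) \<bullet> (z - C) + C \<bullet> C"
      by (auto simp: inner_diff_left inner_diff_right inner_commute algebra_simps)
    then have "C \<bullet> C \<le> z \<bullet> z" by simp
    then show "dist 0 C \<le> dist 0 z"
      by (simp add: norm_eq_sqrt_inner)
  qed
qed

lemma touching_sphere_unit_sphere: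
  fixes Q :: "'a::euclidean_space set"
  assumes "Q \<subseteq> sphere 0 1" "touching_sphere Q C R"
  shows "affine hull Q \<subseteq> {y. C \<bullet> y = C \<bullet> C}" and "R\<^sup>2 = 1 - (norm C)\<^sup>2"
proof -
  have C: "C \<in> affine hull Q" and "Q \<subseteq> sphere C R"
    using assms(2) unfolding touching_sphere_def by auto
  with assms(1) have "Q \<subseteq> {y. C \<bullet> y = (1 + C \<bullet> C - R\<^sup>2) / 2}"
    using sphere_inter_sphere_subset_hyperplane[of 1 C R] by auto
  then have hull: "affine hull Q \<subseteq> {y. C \<bullet> y = (1 + C \<bullet> C - R\<^sup>2) / 2}"
    by (rule hull_minimal) (rule affine_hyperplane)
  with C have "C \<bullet> C = (1 + C \<bullet> C - R\<^sup>2) / 2"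
    by auto
  with hull show "affine hull Q \<subseteq> {y. C \<bullet> y = C \<bullet> C}" and "R\<^sup>2 = 1 - (norm C)\<^sup>2"
    by (auto simp: power2_norm_eq_inner)
qed

lemma proj_origin_eq_touching_centre:
  fixes Q :: "'a::euclidean_space set"
  assumes "Q \<subseteq> sphere 0 1" "touching_sphere Q C R"
  shows "proj_origin Q = C"
  unfolding proj_origin_def
proof (rule closest_point_origin_eq)
  show "convex (affine hull Q)" "closed (affine hull Q)"
    by (simp_all add: affine_imp_convex)
  show "C \<in> affine hull Q"
    using assms(2) unfolding touching_sphere_def by blast
  show "affine hull Q \<subseteq> {y. C \<bullet> y = C \<bullet> C}"
    using touching_sphere_unit_sphere(1)[OF assms] .
qed

theorem proposition2p5:
  fixes Q :: "'a::euclidean_space set" and C :: 'a and R :: real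
  assumes "Q \<subseteq> sphere 0 1"
    and "\<not> affine_dependent Q"
    and "touching_sphere Q C R"
  shows "(nearly_pos_spanning Q \<longleftrightarrow> C \<in> convex hull Q) \<and>
         (nearly_pos_spanning Q \<longrightarrow> deficiency Q = sqrt (1 - R\<^sup>2))"
proof -
  have "proj_origin Q = C"
    using proj_origin_eq_touching_centre[OF assms(1,3)] .
  moreover have "sqrt (1 - R\<^sup>2) = norm C"
    using touching_sphere_unit_sphere(2)[OF assms(1,3)] by simp
  ultimately show ?thesis
    using assms(2) unfolding nearly_pos_spanning_def deficiency_def by simp
qed

end
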